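(* Let $0<\epsilon<1$ and let $p=p(n)$ satisfy $0\le p(n)\le 1-\epsilon$ for all $n$. If $p(n)\sqrt{n}/\log n \to \infty$ as $n \to \infty$, then the probability that the random graph $G(n,p)$ is not Hamiltonian is $(1-p)^{(1+o(1))n}$ as $n\to\infty$.
   Context: $G(n,p)$ is the Erdős–Rényi random graph on $n$ vertices in which each pair of vertices is an edge independently with probability $p$. *)

theory Defs
  imports "HOL-Analysis.Analysis"
begin

text \<open>Simple graphs on the vertex set {0..<n}: an edge set is a set of 2-element
  subsets of {0..<n}.\<close>

definition all_edges :: "nat \<Rightarrow> nat set set" where
  "all_edges n = {e. \<exists>i j. i < j \<and> j < n \<and> e = {i, j}}"

definition hamiltonian :: "nat \<Rightarrow> nat set set \<Rightarrow> bool" where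
  "hamiltonian n E \<longleftrightarrow> 3 \<le> n \<and>
     (\<exists>f. bij_betw f {0..<n} {0..<n} \<and> (\<forall>i<n. {f i, f ((i + 1) mod n)} \<in> E))"

definition gnp_prob :: "nat \<Rightarrow> real \<Rightarrow> (nat set set \<Rightarrow> bool) \<Rightarrow> real" where
  "gnp_prob n p P = (\<Sum>E \<in> {E. E \<subseteq> all_edges n \<and> P E}.
      p ^ card E * (1 - p) ^ (card (all_edges n) - card E))"

end

theory Submission
  imports Defs
begin

text \<open>Lower bound: with probability (1 - p)^(n - 1) the vertex 0 is isolated.
  Upper bound: by the Chvatal-Erdos theorem, proved below by the longest-cycle argument, a graph
  is Hamiltonian as soon as it has no independent set of k vertices and no separating set of fewer
  than k vertices. For k \<approx> 3\<surd>n a union bound gives probability at most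
  n^k (1 - p)^(k choose 2) \<le> n^k (1 - p)^(2n) for the first event and, summing over the smaller side
  of a separation, roughly n^(k + 2) (1 - p)^(n - k) for the second. Once p \<surd>n / log n \<rightarrow> \<infinity>
  both are (1 - p)^((1 - o(1)) n), which matches the lower bound.\<close>

section \<open>Walks and cycles\<close>

fun walk :: "nat set set \<Rightarrow> nat list \<Rightarrow> bool" where
  "walk E [] = True"
| "walk E [x] = True"
| "walk E (x # y # xs) \<longleftrightarrow> {x, y} \<in> E \<and> walk E (y # xs)"

lemma walk_Cons: "walk E (x # xs) \<longleftrightarrow> walk E xs \<and> (xs \<noteq> [] \<longrightarrow> {x, hd xs} \<in> E)"
  by (cases xs) auto

lemma walk_append:
  "walk E (xs @ ys) \<longleftrightarrow> walk E xs \<and> walk E ys \<and> (xs \<noteq> [] \<and> ys \<noteq> [] \<longrightarrow> {last xs, hd ys} \<in> E)"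
  by (induction xs) (auto simp: walk_Cons)

lemma walk_rev: "walk E (rev xs) \<longleftrightarrow> walk E xs"
  by (induction xs) (auto simp: walk_append walk_Cons last_rev insert_commute)

lemma walk_take: "walk E xs \<Longrightarrow> walk E (take j xs)"
  by (metis append_take_drop_id walk_append)

lemma walk_nth: "walk E xs \<Longrightarrow> Suc i < length xs \<Longrightarrow> {xs ! i, xs ! Suc i} \<in> E"
proof (induction xs arbitrary: i)
  case (Cons a xs)
  then show ?case by (cases i) (auto simp: walk_Cons hd_conv_nth)
qed simp

lemma walk_shortcut_to_path:
  assumes "w \<noteq> []" "walk E w"
  obtains P where "P \<noteq> []" "distinct P" "walk E P" "hd P = hd w" "last P = last w" "set P \<subseteq> set w"
  using assms
proof (induction "length w" arbitrary: w rule: less_induct)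
  case less
  show ?case
  proof (cases "distinct w")
    case True
    then show ?thesis using less.prems by blast
  next
    case False
    then obtain as y bs cs where w: "w = as @ [y] @ bs @ [y] @ cs"
      using not_distinct_decomp by blast
    define w' where "w' = as @ [y] @ cs"
    have "walk E w'" using less.prems(3) unfolding w w'_def by (auto simp: walk_append walk_Cons)
    moreover have "hd w' = hd w" "last w' = last w" "set w' \<subseteq> set w" unfolding w w'_def
      by (cases as; cases cs; auto)+
    moreover have "length w' < length w" "w' \<noteq> []" unfolding w w'_def by simp_all
    ultimately show ?thesis using less.hyps[of w'] less.prems(1) by (metis subset_trans)
  qed
qed

lemma all_edges_memD:
  assumes "E \<subseteq> all_edges n" "{a, b} \<in> E"
  shows "a \<noteq> b" "a < n" "b < n"
proof -
  from assms obtain i j where "i < j" "j < n" "{a, b} = {i, j}" unfolding all_edges_def by blast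
  then show "a \<noteq> b" "a < n" "b < n" by (auto simp: doubleton_eq_iff)
qed

definition is_cycle :: "nat set set \<Rightarrow> nat list \<Rightarrow> bool" where
  "is_cycle E c \<longleftrightarrow> distinct c \<and> 3 \<le> length c \<and> walk E c \<and> {last c, hd c} \<in> E"

lemma cycle_rotate1:
  assumes "is_cycle E c"
  shows "is_cycle E (rotate1 c)"
proof -
  obtain a b bs where "c = a # b # bs"
    using assms unfolding is_cycle_def by (metis Suc_le_length_iff numeral_3_eq_3 Suc_leD)
  then show ?thesis using assms
    unfolding is_cycle_def by (auto simp: walk_append walk_Cons insert_commute hd_append)
qed

lemma cycle_rotate: "is_cycle E c \<Longrightarrow> is_cycle E (rotate j c)"
  by (induction j) (auto simp: cycle_rotate1)

lemma hd_last_rotate_Suc: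
  assumes "i < length c"
  shows "hd (rotate (Suc i) c) = c ! (Suc i mod length c)" "last (rotate (Suc i) c) = c ! i"
proof -
  have ne: "c \<noteq> []" using assms by auto
  show "hd (rotate (Suc i) c) = c ! (Suc i mod length c)"
    using hd_rotate_conv_nth[OF ne] by (simp del: rotate_Suc)
  have "last (rotate (Suc i) c) = rotate (Suc i) c ! (length c - 1)"
    using ne by (simp add: last_conv_nth del: rotate_Suc)
  also have "\<dots> = c ! ((Suc i + (length c - 1)) mod length c)"
    using ne by (simp add: nth_rotate del: rotate_Suc)
  also have "Suc i + (length c - 1) = i + length c"
    using assms by simp
  finally show "last (rotate (Suc i) c) = c ! i" using assms by simp
qed

lemma cycle_append_path:
  assumes "is_cycle E c" "P \<noteq> []" "distinct P" "walk E P" "set P \<inter> set c = {}"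
    and "{last c, hd P} \<in> E" "{last P, hd c} \<in> E"
  shows "is_cycle E (c @ P)"
  using assms by (auto simp: is_cycle_def walk_append hd_append)

text \<open>Rerouting: the cycle edges {last xs, hd ys} and {last ys, hd xs} are replaced by the
  detour through P and the chord {hd xs, hd ys}.\<close>
lemma cycle_reverse_through_path:
  assumes "is_cycle E (xs @ ys)" "xs \<noteq> []" "ys \<noteq> []"
    and "P \<noteq> []" "distinct P" "walk E P" "set P \<inter> set (xs @ ys) = {}"
    and "{last xs, hd P} \<in> E" "{last P, last ys} \<in> E" "{hd xs, hd ys} \<in> E"
  shows "is_cycle E (xs @ P @ rev ys)"
  using assms by (auto simp: is_cycle_def walk_append walk_rev hd_rev last_rev insert_commute)

lemma hamiltonian_if_spanning_cycle:
  assumes c: "is_cycle E c" and spans: "set c = {0..<n}"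
  shows "hamiltonian n E"
proof -
  have dist: "distinct c" using c unfolding is_cycle_def by simp
  have len: "length c = n" using distinct_card[OF dist] spans by simp
  have n3: "3 \<le> n" using c len unfolding is_cycle_def by simp
  have "bij_betw ((!) c) {0..<n} {0..<n}"
  proof (rule bij_betw_imageI)
    show "inj_on ((!) c) {0..<n}" using dist len by (simp add: inj_on_def nth_eq_iff_index_eq)
    have "(!) c ` {0..<n} = set c" using len by (auto simp: set_conv_nth)
    then show "(!) c ` {0..<n} = {0..<n}" using spans by simp
  qed
  moreover have "{c ! i, c ! ((i + 1) mod n)} \<in> E" if i: "i < n" for i
  proof (cases "Suc i < n")
    case True
    then show ?thesis using c len walk_nth[of E c i] unfolding is_cycle_def by simp
  next
    case False
    then have "Suc i = n" using i by simp
    then have "i = n - 1" "(i + 1) mod n = 0" by auto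
    moreover have "c \<noteq> []" using len n3 by auto
    then have "last c = c ! (n - 1)" "hd c = c ! 0"
      using len by (simp_all add: last_conv_nth hd_conv_nth)
    ultimately show ?thesis using c unfolding is_cycle_def by simp
  qed
  ultimately show ?thesis unfolding hamiltonian_def using n3 by blast
qed

section \<open>The Chvatal-Erdos theorem\<close>

definition independent_set :: "nat set set \<Rightarrow> nat set \<Rightarrow> bool" where
  "independent_set E K \<longleftrightarrow> (\<forall>u\<in>K. \<forall>w\<in>K. {u, w} \<notin> E)"

definition separates :: "nat \<Rightarrow> nat set set \<Rightarrow> nat set \<Rightarrow> nat set \<Rightarrow> bool" where
  "separates n E S A \<longleftrightarrow> A \<subseteq> {0..<n} \<and> S \<subseteq> {0..<n} \<and> A \<inter> S = {} \<and> A \<noteq> {} \<and>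
     {0..<n} - A - S \<noteq> {} \<and> (\<forall>a\<in>A. \<forall>b\<in>{0..<n} - A - S. {a, b} \<notin> E)"

lemma distinct_length_le:
  assumes "distinct xs" "set xs \<subseteq> {0..<n}"
  shows "length xs \<le> n"
  using card_mono[OF _ assms(2)] distinct_card[OF assms(1)] by simp

lemma two_distinct_neighbours:
  assumes E: "E \<subseteq> all_edges n" and n3: "3 \<le> n" and v: "v < n"
    and no_sep: "\<And>S A. card S < 2 \<Longrightarrow> \<not> separates n E S A"
  shows "\<exists>u w. u \<noteq> w \<and> {v, u} \<in> E \<and> {v, w} \<in> E"
proof -
  define N where "N = {u. {v, u} \<in> E}"
  have N: "N \<subseteq> {0..<n} - {v}" using all_edges_memD[OF E] unfolding N_def by auto
  then have fin: "finite N" by (rule finite_subset) simp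
  have "\<not> card N < 2"
  proof
    assume small: "card N < 2"
    have "{0..<n} - {v} - N \<noteq> {}"
    proof
      assume "{0..<n} - {v} - N = {}"
      then have "card ({0..<n} - {v}) \<le> card N" using fin by (intro card_mono) auto
      then show False using small v n3 by simp
    qed
    moreover have "{v, v} \<notin> E" using all_edges_memD(1)[OF E, of v v] by blast
    ultimately have "separates n E N {v}" using N v unfolding separates_def N_def by auto
    then show False using no_sep small by blast
  qed
  then obtain U where "U \<subseteq> N" "card U = 2" by (meson not_less obtain_subset_with_card_n)
  then show ?thesis unfolding N_def by (auto simp: card_2_iff)
qed

lemma exists_cycle_if_two_neighbours:
  assumes E: "E \<subseteq> all_edges n" and n: "0 < n"
    and deg: "\<And>v. v < n \<Longrightarrow> \<exists>u w. u \<noteq> w \<and> {v, u} \<in> E \<and> {v, w} \<in> E"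
  shows "\<exists>c. is_cycle E c \<and> set c \<subseteq> {0..<n}"
proof -
  define path where "path P \<longleftrightarrow> P \<noteq> [] \<and> distinct P \<and> walk E P \<and> set P \<subseteq> {0..<n}" for P
  have "path [0]" using n unfolding path_def by simp
  moreover have "\<forall>P. path P \<longrightarrow> length P < Suc n"
    using distinct_length_le unfolding path_def by (simp add: less_Suc_eq_le)
  ultimately obtain P where P: "path P" and longest: "\<And>Q. path Q \<Longrightarrow> length Q \<le> length P"
    using ex_has_greatest_nat[of path "[0]" length "Suc n"] by blast
  then obtain v0 rest where Pv: "P = v0 # rest" unfolding path_def by (cases P) auto
  text \<open>A longest path cannot be extended at its start, so all neighbours of v0 lie on it.\<close>
  have on_path: "u \<in> set P" if "{v0, u} \<in> E" for u
  proof (rule ccontr)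
    assume "u \<notin> set P"
    then have "path (u # P)" using P that all_edges_memD[OF E that]
      unfolding path_def by (auto simp: walk_Cons Pv insert_commute)
    then show False using longest by fastforce
  qed
  have "v0 < n" using P unfolding path_def Pv by auto
  then obtain u w where uw: "u \<noteq> w" "{v0, u} \<in> E" "{v0, w} \<in> E" using deg by blast
  obtain iu iw where "iu < length P" "P ! iu = u" "iw < length P" "P ! iw = w"
    using on_path[OF uw(2)] on_path[OF uw(3)] by (auto simp: in_set_conv_nth)
  moreover have "iu \<noteq> 0" "iw \<noteq> 0"
    using uw all_edges_memD(1)[OF E] \<open>P ! iu = u\<close> \<open>P ! iw = w\<close> Pv by (metis nth_Cons_0)+
  ultimately obtain j where j: "2 \<le> j" "j < length P" "{v0, P ! j} \<in> E"
    using uw by (metis One_nat_def less_2_cases not_less)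
  define c where "c = take (Suc j) P"
  have "is_cycle E c" unfolding is_cycle_def
  proof (intro conjI)
    show "distinct c" "walk E c" using P walk_take unfolding path_def c_def by auto
    show "3 \<le> length c" using j unfolding c_def by simp
    have "last c = P ! j" unfolding c_def using j by (simp add: take_Suc_conv_app_nth)
    moreover have "hd c = v0" unfolding c_def Pv by simp
    ultimately show "{last c, hd c} \<in> E" using j by (simp add: insert_commute)
  qed
  moreover have "set c \<subseteq> {0..<n}" using P set_take_subset unfolding path_def c_def by fastforce
  ultimately show ?thesis by blast
qed

definition reach_avoiding :: "nat \<Rightarrow> nat set set \<Rightarrow> nat set \<Rightarrow> nat \<Rightarrow> nat set" where
  "reach_avoiding n E C v =
     {u. \<exists>w. w \<noteq> [] \<and> walk E w \<and> hd w = v \<and> last w = u \<and> set w \<subseteq> {0..<n} - C}"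

lemma reach_avoiding_subset: "reach_avoiding n E C v \<subseteq> {0..<n} - C"
  unfolding reach_avoiding_def by (auto dest: last_in_set)

lemma reach_avoiding_self: "v \<in> {0..<n} - C \<Longrightarrow> v \<in> reach_avoiding n E C v"
  unfolding reach_avoiding_def by (intro CollectI exI[of _ "[v]"]) auto

lemma reach_avoiding_step:
  assumes "u \<in> reach_avoiding n E C v" "{u, z} \<in> E" "z \<in> {0..<n} - C"
  shows "z \<in> reach_avoiding n E C v"
proof -
  from assms(1) obtain w where "w \<noteq> []" "walk E w" "hd w = v" "last w = u" "set w \<subseteq> {0..<n} - C"
    unfolding reach_avoiding_def by blast
  then show ?thesis using assms(2,3) unfolding reach_avoiding_def
    by (intro CollectI exI[of _ "w @ [z]"]) (auto simp: walk_append)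
qed

lemma reach_avoiding_walk:
  assumes "w \<noteq> []" "walk E w" "hd w = v" "set w \<subseteq> {0..<n} - C"
  shows "set w \<subseteq> reach_avoiding n E C v"
proof
  fix x assume "x \<in> set w"
  then obtain i where i: "i < length w" "w ! i = x" by (auto simp: in_set_conv_nth)
  have "take (Suc i) w \<noteq> []" "hd (take (Suc i) w) = v" using assms by simp_all
  moreover have "last (take (Suc i) w) = x" using i by (simp add: take_Suc_conv_app_nth)
  moreover have "set (take (Suc i) w) \<subseteq> {0..<n} - C" using assms set_take_subset by fast
  ultimately show "x \<in> reach_avoiding n E C v"
    using walk_take[OF assms(2)] unfolding reach_avoiding_def by blast
qed

lemma reach_avoiding_path:
  assumes "h1 \<in> reach_avoiding n E C v" "h2 \<in> reach_avoiding n E C v"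
  obtains P where "P \<noteq> []" "distinct P" "walk E P" "hd P = h1" "last P = h2"
    "set P \<subseteq> reach_avoiding n E C v"
proof -
  from assms obtain w1 w2 where
    w1: "w1 \<noteq> []" "walk E w1" "hd w1 = v" "last w1 = h1" "set w1 \<subseteq> {0..<n} - C" and
    w2: "w2 \<noteq> []" "walk E w2" "hd w2 = v" "last w2 = h2" "set w2 \<subseteq> {0..<n} - C"
    unfolding reach_avoiding_def by blast
  then obtain w2' where w2': "w2 = v # w2'" by (cases w2) auto
  define W where "W = rev w1 @ w2'"
  have "W \<noteq> []" "walk E W" "hd W = h1" "last W = h2"
    using w1 w2 w2' unfolding W_def
    by (auto simp: walk_append walk_rev walk_Cons last_rev hd_rev)
  moreover have "set W \<subseteq> reach_avoiding n E C v"
    using reach_avoiding_walk[OF w1(1-3,5)] reach_avoiding_walk[OF w2(1-3,5)] w2'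
    unfolding W_def by auto
  ultimately show ?thesis using that walk_shortcut_to_path by (metis subset_trans)
qed

locale longest_cycle =
  fixes n :: nat and E :: "nat set set" and c :: "nat list"
  assumes edges: "E \<subseteq> all_edges n"
    and cycle: "is_cycle E c" and cycle_subset: "set c \<subseteq> {0..<n}"
    and longest: "\<And>c'. is_cycle E c' \<Longrightarrow> set c' \<subseteq> {0..<n} \<Longrightarrow> length c' \<le> length c"
begin

definition next_index :: "nat \<Rightarrow> nat" where
  "next_index i = Suc i mod length c"

lemma distinct_cycle: "distinct c" and length_cycle_ge_3: "3 \<le> length c"
  using cycle unfolding is_cycle_def by simp_all

lemma next_index_less: "next_index i < length c"
  using length_cycle_ge_3 unfolding next_index_def by (intro mod_less_divisor) linarith

lemma inj_on_next_index: "inj_on next_index {..<length c}"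
  by (rule inj_onI) (auto simp: next_index_def mod_Suc split: if_splits)

lemma nth_eq_iff: "i < length c \<Longrightarrow> j < length c \<Longrightarrow> c ! i = c ! j \<longleftrightarrow> i = j"
  using distinct_cycle by (simp add: nth_eq_iff_index_eq)

lemma no_detour_between_neighbours:
  assumes P: "P \<noteq> []" "distinct P" "walk E P" "set P \<subseteq> {0..<n} - set c"
    and i: "i < length c" and "{c ! i, hd P} \<in> E" "{last P, c ! next_index i} \<in> E"
  shows False
proof -
  let ?c' = "rotate (Suc i) c"
  have "is_cycle E (?c' @ P)"
    using assms cycle_rotate[OF cycle, of "Suc i"] hd_last_rotate_Suc[OF i]
    by (intro cycle_append_path) (auto simp: next_index_def simp del: rotate_Suc)
  moreover have "set (?c' @ P) \<subseteq> {0..<n}" using P cycle_subset by auto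
  ultimately have "length (?c' @ P) \<le> length c" by (rule longest)
  then show False using P by simp
qed

lemma rotate_split_at:
  assumes ij: "i < length c" "j < length c" "i \<noteq> j"
  obtains xs ys where "rotate (Suc i) c = xs @ ys" "xs \<noteq> []" "ys \<noteq> []"
    "hd xs = c ! next_index i" "last xs = c ! j" "hd ys = c ! next_index j" "last ys = c ! i"
proof -
  define c' where "c' = rotate (Suc i) c"
  have c': "length c' = length c" "set c' = set c" unfolding c'_def by simp_all
  have c'_nth: "c' ! l = c ! ((Suc i + l) mod length c)" if "l < length c" for l
    using that unfolding c'_def by (simp add: nth_rotate del: rotate_Suc)
  have hd_last: "hd c' = c ! next_index i" "last c' = c ! i"
    using hd_last_rotate_Suc[OF ij(1)] unfolding c'_def next_index_def by simp_all
  obtain j' where j': "j' < length c" "c' ! j' = c ! j"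
    using c' ij(2) by (metis in_set_conv_nth nth_mem)
  have "(Suc i + j') mod length c < length c"
    using length_cycle_ge_3 by (intro mod_less_divisor) linarith
  then have j'_pos: "(Suc i + j') mod length c = j" using j' ij(2) c'_nth nth_eq_iff by simp
  have "Suc j' < length c"
  proof (rule ccontr)
    assume "\<not> Suc j' < length c"
    then have "j' = length c' - 1" using j' c' by simp
    moreover have "c' \<noteq> []" using c' length_cycle_ge_3 by auto
    ultimately have "c' ! j' = last c'" by (simp add: last_conv_nth)
    then show False using j' ij hd_last nth_eq_iff by simp
  qed
  show thesis
  proof (rule that[of "take (Suc j') c'" "drop (Suc j') c'", folded c'_def])
    show "hd (drop (Suc j') c') = c ! next_index j"
      using \<open>Suc j' < length c\<close> c' c'_nth j'_pos unfolding next_index_def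
      by (simp add: hd_drop_conv_nth) (metis add_Suc_right mod_Suc_eq)
    show "last (take (Suc j') c') = c ! j"
      using \<open>Suc j' < length c\<close> j' c' by (simp add: take_Suc_conv_app_nth)
  qed (use \<open>Suc j' < length c\<close> c' hd_last in auto)
qed

lemma no_chord_between_successors:
  assumes P: "P \<noteq> []" "distinct P" "walk E P" "set P \<subseteq> {0..<n} - set c"
    and ij: "i < length c" "j < length c" "i \<noteq> j"
    and "{c ! i, last P} \<in> E" "{c ! j, hd P} \<in> E"
  shows "{c ! next_index i, c ! next_index j} \<notin> E"
proof
  assume chord: "{c ! next_index i, c ! next_index j} \<in> E"
  obtain xs ys where xs_ys: "rotate (Suc i) c = xs @ ys" "xs \<noteq> []" "ys \<noteq> []"
    "hd xs = c ! next_index i" "last xs = c ! j" "hd ys = c ! next_index j" "last ys = c ! i"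
    using rotate_split_at[OF ij] .
  have "is_cycle E (xs @ ys)" using cycle_rotate[OF cycle, of "Suc i"] xs_ys(1) by simp
  moreover have set_xs_ys: "set (xs @ ys) = set c" using arg_cong[OF xs_ys(1), of set] by simp
  ultimately have "is_cycle E (xs @ P @ rev ys)"
    using xs_ys assms chord by (intro cycle_reverse_through_path) (auto simp: insert_commute)
  moreover have "set (xs @ P @ rev ys) \<subseteq> {0..<n}" using P cycle_subset set_xs_ys by auto
  ultimately have "length (xs @ P @ rev ys) \<le> length c" by (rule longest)
  moreover have "length (xs @ ys) = length c" using arg_cong[OF xs_ys(1), of length] by simp
  moreover have "length P > 0" using P by simp
  ultimately show False by simp
qed

definition attachments :: "nat set \<Rightarrow> nat set" where
  "attachments H = {i. i < length c \<and> (\<exists>h\<in>H. {c ! i, h} \<in> E)}"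

lemma attachments_less: "i \<in> attachments H \<Longrightarrow> i < length c"
  unfolding attachments_def by simp

context
  fixes v :: nat
  assumes v: "v \<in> {0..<n} - set c"
begin

abbreviation "H \<equiv> reach_avoiding n E (set c) v"

lemma next_index_not_attachment:
  assumes i: "i \<in> attachments H"
  shows "next_index i \<notin> attachments H"
proof
  assume "next_index i \<in> attachments H"
  then obtain h' where h': "h' \<in> H" "{c ! next_index i, h'} \<in> E"
    unfolding attachments_def by blast
  obtain h where h: "h \<in> H" "{c ! i, h} \<in> E" and "i < length c"
    using i unfolding attachments_def by blast
  obtain P where P: "P \<noteq> []" "distinct P" "walk E P" "hd P = h" "last P = h'" "set P \<subseteq> H"
    using reach_avoiding_path[OF h(1) h'(1)] .
  moreover have "set P \<subseteq> {0..<n} - set c" using P(6) reach_avoiding_subset by blast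
  ultimately show False
    using no_detour_between_neighbours[of P i] h h' \<open>i < length c\<close> by (auto simp: insert_commute)
qed

lemma independent_successors:
  "independent_set E (insert v ((\<lambda>i. c ! next_index i) ` attachments H))"
proof -
  have no_loop: "{u, u} \<notin> E" for u using all_edges_memD(1)[OF edges, of u u] by blast
  have v_succ: "{v, c ! next_index i} \<notin> E" if "i \<in> attachments H" for i
  proof
    assume "{v, c ! next_index i} \<in> E"
    then have "next_index i \<in> attachments H"
      using reach_avoiding_self[OF v] next_index_less
      unfolding attachments_def by (auto simp: insert_commute)
    then show False using next_index_not_attachment[OF that] by simp
  qed
  have succ_succ: "{c ! next_index i, c ! next_index j} \<notin> E"
    if ij: "i \<in> attachments H" "j \<in> attachments H" for i j
  proof (cases "i = j")
    case False
    obtain hi hj where "hi \<in> H" "{c ! i, hi} \<in> E" "hj \<in> H" "{c ! j, hj} \<in> E"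
      using ij unfolding attachments_def by blast
    moreover obtain P where
      P: "P \<noteq> []" "distinct P" "walk E P" "hd P = hj" "last P = hi" "set P \<subseteq> H"
      using reach_avoiding_path[OF \<open>hj \<in> H\<close> \<open>hi \<in> H\<close>] .
    moreover have "set P \<subseteq> {0..<n} - set c" using P(6) reach_avoiding_subset by blast
    ultimately show ?thesis
      using no_chord_between_successors[of P i j] ij False attachments_less
      by (simp add: insert_commute)
  qed (use no_loop in simp)
  show ?thesis
    unfolding independent_set_def using no_loop v_succ succ_succ by (auto simp: insert_commute)
qed

lemma card_independent_successors:
  "card (insert v ((\<lambda>i. c ! next_index i) ` attachments H)) = card (attachments H) + 1"
proof -
  have "inj_on (\<lambda>i. c ! next_index i) (attachments H)"
    using inj_on_next_index attachments_less next_index_less nth_eq_iff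
    by (auto simp: inj_on_def)
  moreover have "finite (attachments H)"
    using attachments_less by (meson finite_nat_set_iff_bounded)
  moreover have "v \<notin> (\<lambda>i. c ! next_index i) ` attachments H"
    using v next_index_less by auto
  ultimately show ?thesis by (simp add: card_image)
qed

text \<open>The cycle vertices at the attachments separate H from the rest, and fewer than k vertices
  cannot separate anything.\<close>
lemma card_attachments_ge:
  assumes no_sep: "\<And>S A. card S < k \<Longrightarrow> \<not> separates n E S A"
  shows "k \<le> card (attachments H)"
proof (rule ccontr)
  assume small: "\<not> k \<le> card (attachments H)"
  define S where "S = (!) c ` attachments H"
  have card_S: "card S = card (attachments H)"
    unfolding S_def using nth_eq_iff attachments_less by (intro card_image) (auto simp: inj_on_def)
  have S: "S \<subseteq> set c" unfolding S_def using attachments_less by auto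
  have H: "H \<subseteq> {0..<n} - set c" by (rule reach_avoiding_subset)
  have rest: "{0..<n} - H - S \<noteq> {}"
  proof (cases "attachments H = {}")
    case True
    moreover have "c ! 0 \<in> set c" using length_cycle_ge_3 by (intro nth_mem) linarith
    ultimately have "c ! 0 \<in> {0..<n} - H - S" using H cycle_subset unfolding S_def by auto
    then show ?thesis by blast
  next
    case False
    then obtain i where i: "i \<in> attachments H" by blast
    have "c ! next_index i \<notin> S"
      using next_index_not_attachment[OF i] next_index_less attachments_less nth_eq_iff
      unfolding S_def by auto
    then have "c ! next_index i \<in> {0..<n} - H - S"
      using H cycle_subset next_index_less[of i] nth_mem by blast
    then show ?thesis by blast
  qed
  have "\<not> ({a, b} \<in> E)" if "a \<in> H" "b \<in> {0..<n} - H - S" for a b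
  proof
    assume ab: "{a, b} \<in> E"
    show False
    proof (cases "b \<in> set c")
      case True
      then obtain t where "t < length c" "c ! t = b" by (auto simp: in_set_conv_nth)
      then have "t \<in> attachments H"
        using ab that unfolding attachments_def by (auto simp: insert_commute)
      then show False using \<open>c ! t = b\<close> that unfolding S_def by blast
    next
      case False
      then show False using reach_avoiding_step[OF \<open>a \<in> H\<close> ab] that by blast
    qed
  qed
  then have "separates n E S H"
    unfolding separates_def using H S rest cycle_subset reach_avoiding_self[OF v] by blast
  then show False using no_sep[of S] small card_S by simp
qed

end

lemma spanning:
  assumes no_indep: "\<And>K. K \<subseteq> {0..<n} \<Longrightarrow> k \<le> card K \<Longrightarrow> \<not> independent_set E K"
    and no_sep: "\<And>S A. card S < k \<Longrightarrow> \<not> separates n E S A"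
  shows "set c = {0..<n}"
proof (rule ccontr)
  assume "set c \<noteq> {0..<n}"
  then obtain v where v: "v \<in> {0..<n} - set c" using cycle_subset by blast
  let ?K = "insert v ((\<lambda>i. c ! next_index i) ` attachments (reach_avoiding n E (set c) v))"
  have "k \<le> card (attachments (reach_avoiding n E (set c) v))"
    by (rule card_attachments_ge[OF v]) (use no_sep in blast)
  moreover have "?K \<subseteq> {0..<n}" using v cycle_subset next_index_less nth_mem by blast
  moreover have "k \<le> card ?K"
    using calculation card_independent_successors[OF v] by simp
  ultimately show False using no_indep independent_successors[OF v] by blast
qed

end

theorem chvatal_erdos:
  assumes E: "E \<subseteq> all_edges n" and n: "3 \<le> n" and k: "2 \<le> k"
    and no_indep: "\<And>K. K \<subseteq> {0..<n} \<Longrightarrow> k \<le> card K \<Longrightarrow> \<not> independent_set E K"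
    and no_sep: "\<And>S A. card S < k \<Longrightarrow> \<not> separates n E S A"
  shows "hamiltonian n E"
proof -
  define long where "long c \<longleftrightarrow> is_cycle E c \<and> set c \<subseteq> {0..<n}" for c
  have "\<exists>u w. u \<noteq> w \<and> {v, u} \<in> E \<and> {v, w} \<in> E" if "v < n" for v
    using two_distinct_neighbours[OF E n that] no_sep k by simp
  then obtain c0 where "long c0"
    using exists_cycle_if_two_neighbours[OF E] n unfolding long_def by auto
  moreover have "\<forall>c. long c \<longrightarrow> length c < Suc n"
    using distinct_length_le unfolding long_def is_cycle_def by (simp add: less_Suc_eq_le)
  ultimately obtain c where "long c" and "\<And>c'. long c' \<Longrightarrow> length c' \<le> length c"
    using ex_has_greatest_nat[of long c0 length "Suc n"] by blast
  then interpret longest_cycle n E c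
    using E unfolding long_def by unfold_locales auto
  show ?thesis using hamiltonian_if_spanning_cycle[OF cycle spanning[OF no_indep no_sep]] .
qed

section \<open>Edge events in G(n, p)\<close>

lemma all_edges_eq: "all_edges n = {e. e \<subseteq> {0..<n} \<and> card e = 2}"
proof
  show "all_edges n \<subseteq> {e. e \<subseteq> {0..<n} \<and> card e = 2}"
    unfolding all_edges_def by auto
  show "{e. e \<subseteq> {0..<n} \<and> card e = 2} \<subseteq> all_edges n"
  proof
    fix e assume e: "e \<in> {e. e \<subseteq> {0..<n} \<and> card e = 2}"
    then obtain x y where xy: "e = {x, y}" "x \<noteq> y" by (auto simp: card_2_iff)
    show "e \<in> all_edges n"
    proof (cases "x < y")
      case True
      then show ?thesis using e xy unfolding all_edges_def by auto
    next
      case False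
      then have "y < x" using xy by simp
      then show ?thesis using e xy unfolding all_edges_def by (auto simp: insert_commute)
    qed
  qed
qed

lemma finite_all_edges: "finite (all_edges n)"
  unfolding all_edges_eq by (rule finite_subset[of _ "Pow {0..<n}"]) auto

lemma sum_Pow_power_card:
  fixes a b :: "'a :: comm_semiring_1"
  assumes "finite M"
  shows "(\<Sum>X\<in>Pow M. a ^ card X * b ^ (card M - card X)) = (a + b) ^ card M"
proof -
  have "(a + b) ^ card M = (\<Sum>X\<in>Pow M. (\<Prod>x\<in>X. a) * (\<Prod>x\<in>M - X. b))"
    using prod_add[OF assms, of "\<lambda>_. a" "\<lambda>_. b"] by simp
  also have "\<dots> = (\<Sum>X\<in>Pow M. a ^ card X * b ^ (card M - card X))"
    using assms by (intro sum.cong refl) (auto simp: card_Diff_subset finite_subset)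
  finally show ?thesis by simp
qed

lemma gnp_prob_avoid:
  assumes F: "F \<subseteq> all_edges n"
  shows "gnp_prob n p (\<lambda>E. E \<inter> F = {}) = (1 - p) ^ card F"
proof -
  define M where "M = all_edges n - F"
  have M: "finite M" "card (all_edges n) = card F + card M"
    using F finite_all_edges unfolding M_def
    by (auto simp: card_Diff_subset card_mono finite_subset)
  have "gnp_prob n p (\<lambda>E. E \<inter> F = {})
        = (\<Sum>E\<in>Pow M. (1 - p) ^ card F * (p ^ card E * (1 - p) ^ (card M - card E)))"
    unfolding gnp_prob_def
  proof (rule sum.cong)
    show "{E. E \<subseteq> all_edges n \<and> E \<inter> F = {}} = Pow M" unfolding M_def by auto
  next
    fix E assume "E \<in> Pow M"
    then have "card E \<le> card M" using M card_mono by auto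
    then show "p ^ card E * (1 - p) ^ (card (all_edges n) - card E)
             = (1 - p) ^ card F * (p ^ card E * (1 - p) ^ (card M - card E))"
      using M by (simp add: power_add[symmetric] Nat.add_diff_assoc)
  qed
  also have "\<dots> = (1 - p) ^ card F"
    by (simp add: sum_distrib_left[symmetric] sum_Pow_power_card[OF M(1)])
  finally show ?thesis .
qed

lemma gnp_prob_mono:
  assumes "0 \<le> p" "p \<le> 1" "\<And>E. E \<subseteq> all_edges n \<Longrightarrow> P E \<Longrightarrow> Q E"
  shows "gnp_prob n p P \<le> gnp_prob n p Q"
  unfolding gnp_prob_def using assms finite_all_edges by (intro sum_mono2) auto

lemma sum_UN_le_sum:
  fixes f :: "'a \<Rightarrow> 'b :: ordered_comm_monoid_add"
  assumes "finite I" "\<And>i. i \<in> I \<Longrightarrow> finite (A i)" "\<And>x. 0 \<le> f x"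
  shows "sum f (\<Union>i\<in>I. A i) \<le> (\<Sum>i\<in>I. sum f (A i))"
  using assms(1,2)
proof (induction I rule: finite_induct)
  case (insert i I)
  let ?U = "\<Union>j\<in>I. A j"
  have "sum f (\<Union>j\<in>insert i I. A j) = sum f (A i \<union> ?U)" by simp
  also have "\<dots> \<le> sum f (A i \<union> ?U) + sum f (A i \<inter> ?U)"
    using assms(3) by (simp add: add_increasing2 sum_nonneg)
  also have "\<dots> = sum f (A i) + sum f ?U"
    using insert by (intro sum.union_inter) auto
  also have "\<dots> \<le> sum f (A i) + (\<Sum>j\<in>I. sum f (A j))"
    using insert by (simp add: add_left_mono)
  also have "\<dots> = (\<Sum>j\<in>insert i I. sum f (A j))"
    using insert.hyps by simp
  finally show ?case .
qed simp

lemma gnp_prob_union_bound: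
  assumes "0 \<le> p" "p \<le> 1" "finite I"
    and cover: "\<And>E. E \<subseteq> all_edges n \<Longrightarrow> P E \<Longrightarrow> \<exists>i\<in>I. Q i E"
  shows "gnp_prob n p P \<le> (\<Sum>i\<in>I. gnp_prob n p (Q i))"
proof -
  define w :: "nat set set \<Rightarrow> real" where
    "w E = p ^ card E * (1 - p) ^ (card (all_edges n) - card E)" for E
  have "gnp_prob n p P = sum w {E. E \<subseteq> all_edges n \<and> P E}" unfolding gnp_prob_def w_def ..
  also have "\<dots> \<le> sum w (\<Union>i\<in>I. {E. E \<subseteq> all_edges n \<and> Q i E})"
    using assms finite_all_edges unfolding w_def by (intro sum_mono2) auto
  also have "\<dots> \<le> (\<Sum>i\<in>I. sum w {E. E \<subseteq> all_edges n \<and> Q i E})"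
    using assms finite_all_edges unfolding w_def by (intro sum_UN_le_sum) auto
  also have "\<dots> = (\<Sum>i\<in>I. gnp_prob n p (Q i))" unfolding gnp_prob_def w_def ..
  finally show ?thesis .
qed

lemma gnp_prob_disj_le:
  assumes "0 \<le> p" "p \<le> 1"
  shows "gnp_prob n p (\<lambda>E. P E \<or> Q E) \<le> gnp_prob n p P + gnp_prob n p Q"
proof -
  have "gnp_prob n p (\<lambda>E. P E \<or> Q E) \<le> (\<Sum>i\<in>{True, False}. gnp_prob n p (if i then P else Q))"
    by (rule gnp_prob_union_bound[OF assms]) auto
  then show ?thesis by simp
qed

section \<open>Bounds on the probability of non-Hamiltonicity\<close>

lemma choose_le_power: "n choose k \<le> n ^ k"
  by (cases "k \<le> n") (auto simp: binomial_le_pow binomial_eq_0)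

lemma gnp_prob_independent_set_le:
  assumes p: "0 \<le> p" "p \<le> 1"
  shows "gnp_prob n p (\<lambda>E. \<exists>K. K \<subseteq> {0..<n} \<and> k \<le> card K \<and> independent_set E K)
         \<le> real (n choose k) * (1 - p) ^ (k choose 2)"
proof -
  define KK where "KK = {K. K \<subseteq> {0..<n} \<and> card K = k}"
  define pairs where "pairs K = {e. e \<subseteq> K \<and> card e = 2}" for K :: "nat set"
  have "gnp_prob n p (\<lambda>E. \<exists>K. K \<subseteq> {0..<n} \<and> k \<le> card K \<and> independent_set E K)
        \<le> (\<Sum>K\<in>KK. gnp_prob n p (\<lambda>E. E \<inter> pairs K = {}))"
  proof (rule gnp_prob_union_bound[OF p])
    show "finite KK" unfolding KK_def by (rule finite_subset[of _ "Pow {0..<n}"]) auto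
    fix E assume "\<exists>K. K \<subseteq> {0..<n} \<and> k \<le> card K \<and> independent_set E K"
    then obtain K0 where K0: "K0 \<subseteq> {0..<n}" "k \<le> card K0" "independent_set E K0" by blast
    then obtain K where K: "K \<subseteq> K0" "card K = k" by (meson obtain_subset_with_card_n)
    have "E \<inter> pairs K = {}"
      using K K0(3) unfolding independent_set_def pairs_def by (force simp: card_2_iff)
    moreover have "K \<in> KK" using K K0 unfolding KK_def by auto
    ultimately show "\<exists>K\<in>KK. E \<inter> pairs K = {}" by blast
  qed
  also have "\<dots> = (\<Sum>K\<in>KK. (1 - p) ^ (k choose 2))"
  proof (rule sum.cong[OF refl])
    fix K assume "K \<in> KK"
    then have K: "K \<subseteq> {0..<n}" "card K = k" "finite K" unfolding KK_def
      by (auto intro: finite_subset)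
    then have "pairs K \<subseteq> all_edges n" "card (pairs K) = k choose 2"
      unfolding pairs_def all_edges_eq using n_subsets[OF K(3), of 2] by auto
    then show "gnp_prob n p (\<lambda>E. E \<inter> pairs K = {}) = (1 - p) ^ (k choose 2)"
      by (simp add: gnp_prob_avoid)
  qed
  also have "\<dots> = real (n choose k) * (1 - p) ^ (k choose 2)"
    unfolding KK_def using n_subsets[of "{0..<n}" k] by simp
  finally show ?thesis .
qed

definition cross_edges :: "nat set \<Rightarrow> nat set \<Rightarrow> nat set set" where
  "cross_edges A B = (\<lambda>(a, b). {a, b}) ` (A \<times> B)"

lemma card_cross_edges:
  assumes "A \<inter> B = {}" "finite A" "finite B"
  shows "card (cross_edges A B) = card A * card B"
proof -
  have "inj_on (\<lambda>(a, b). {a, b}) (A \<times> B)"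
    using assms(1) by (auto simp: inj_on_def doubleton_eq_iff)
  then show ?thesis unfolding cross_edges_def by (simp add: card_image card_cartesian_product)
qed

lemma cross_edges_subset_all_edges:
  assumes "A \<inter> B = {}" "A \<subseteq> {0..<n}" "B \<subseteq> {0..<n}"
  shows "cross_edges A B \<subseteq> all_edges n"
  unfolding cross_edges_def all_edges_eq using assms by (auto simp: card_2_iff) blast

lemma separates_smaller_side:
  assumes sep: "separates n E S A"
  obtains A' where "separates n E S A'" "card A' \<le> card ({0..<n} - A' - S)"
proof (cases "card A \<le> card ({0..<n} - A - S)")
  case False
  define B where "B = {0..<n} - A - S"
  have rest: "{0..<n} - B - S = A" using sep unfolding B_def separates_def by auto
  then have "\<forall>a\<in>B. \<forall>b\<in>{0..<n} - B - S. {a, b} \<notin> E"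
    using sep unfolding B_def separates_def by (metis Diff_iff insert_commute)
  then have "separates n E S B" using sep rest unfolding B_def separates_def by auto
  then show ?thesis using that False rest by (simp add: B_def)
qed (use assms in blast)

text \<open>The sides of a separation have a + 1 \<le> b vertices and the separator has s < k.\<close>
lemma cross_pairs_ge:
  fixes a b s n k :: nat
  assumes "Suc a + b + s = n" "s < k" "Suc a \<le> b"
  shows "n - k + a * ((n - k) div 2 - 1) \<le> Suc a * b"
proof -
  define h where "h = (n - k) div 2 - 1"
  have "h + 1 \<le> b" unfolding h_def using assms by linarith
  then have "a * (h + 1) \<le> a * b" by (intro mult_le_mono2)
  then show ?thesis using assms unfolding h_def[symmetric] by (simp add: algebra_simps)
qed

lemma gnp_prob_no_cross_edges_le:
  assumes p: "0 \<le> p" "p \<le> 1"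
    and A: "A \<subseteq> {0..<n}" "A \<noteq> {}" "A \<inter> S = {}" and S: "S \<subseteq> {0..<n}" "card S < k"
    and smaller: "card A \<le> card ({0..<n} - A - S)"
  shows "gnp_prob n p (\<lambda>E. E \<inter> cross_edges A ({0..<n} - A - S) = {})
         \<le> (1 - p) ^ (n - k) * ((1 - p) ^ ((n - k) div 2 - 1)) ^ (card A - 1)"
proof -
  define B where "B = {0..<n} - A - S"
  have fin: "finite A" "finite B" "finite S"
    using A S unfolding B_def by (auto intro: finite_subset)
  have "{0..<n} = A \<union> B \<union> S" "A \<inter> B = {}" "(A \<union> B) \<inter> S = {}"
    using A S unfolding B_def by auto
  then have parts: "card A + card B + card S = n"
    using fin by (metis card_Un_disjoint card_atLeastLessThan diff_zero finite_Un)
  have "card A = Suc (card A - 1)" using A fin by (simp add: card_gt_0_iff)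
  then have count: "n - k + (card A - 1) * ((n - k) div 2 - 1) \<le> card A * card B"
    using cross_pairs_ge[of "card A - 1" "card B" "card S" n k] parts S smaller
    unfolding B_def by (metis add.commute)
  have "B \<subseteq> {0..<n}" unfolding B_def by auto
  then have "gnp_prob n p (\<lambda>E. E \<inter> cross_edges A B = {}) = (1 - p) ^ (card A * card B)"
    using gnp_prob_avoid[OF cross_edges_subset_all_edges[OF \<open>A \<inter> B = {}\<close> A(1)]]
      card_cross_edges[OF \<open>A \<inter> B = {}\<close> fin(1,2)] by simp
  also have "\<dots> \<le> (1 - p) ^ (n - k + (card A - 1) * ((n - k) div 2 - 1))"
    using count p by (intro power_decreasing) auto
  also have "\<dots> = (1 - p) ^ (n - k) * ((1 - p) ^ ((n - k) div 2 - 1)) ^ (card A - 1)"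
    by (metis power_add power_mult mult.commute)
  finally show ?thesis unfolding B_def .
qed

lemma sum_power_card_triples:
  fixes c x :: real
  assumes "finite V" "finite SS"
  shows "(\<Sum>(v, A', S)\<in>V \<times> Pow V \<times> SS. c * x ^ card A')
         = real (card V) * real (card SS) * c * (1 + x) ^ card V"
proof -
  have "(\<Sum>(v, A', S)\<in>V \<times> Pow V \<times> SS. c * x ^ card A')
        = (\<Sum>v\<in>V. \<Sum>A'\<in>Pow V. \<Sum>S\<in>SS. c * x ^ card A')"
    by (simp only: sum.cartesian_product)
  also have "\<dots> = real (card V) * real (card SS) * c * (\<Sum>A'\<in>Pow V. x ^ card A')"
    by (simp add: sum_distrib_left mult_ac)
  also have "(\<Sum>A'\<in>Pow V. x ^ card A') = (1 + x) ^ card V"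
    using sum_Pow_power_card[OF assms(1), of x 1] by (simp add: add.commute)
  finally show ?thesis .
qed

text \<open>Union bound over triples (v, A', S), where A = insert v A' is the smaller side; summing over
  all A' \<subseteq> V produces the factor (1 + x)^n.\<close>
lemma gnp_prob_separator_le:
  assumes p: "0 \<le> p" "p \<le> 1"
  shows "gnp_prob n p (\<lambda>E. \<exists>S A. card S < k \<and> separates n E S A)
     \<le> real n * (1 + (1 - p) ^ ((n - k) div 2 - 1)) ^ n
         * real (card {S. S \<subseteq> {0..<n} \<and> card S < k}) * (1 - p) ^ (n - k)"
proof -
  define V where "V = {0..<n}"
  define SS where "SS = {S. S \<subseteq> V \<and> card S < k}"
  define x where "x = (1 - p) ^ ((n - k) div 2 - 1)"
  define bound where
    "bound = (\<lambda>(v :: nat, A' :: nat set, S :: nat set). (1 - p) ^ (n - k) * x ^ card A')"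
  define J where "J = V \<times> Pow V \<times> SS"
  define ok where "ok = (\<lambda>(v, A', S). v \<notin> A' \<and> insert v A' \<inter> S = {}
                           \<and> card (insert v A') \<le> card (V - insert v A' - S))"
  define avoid where
    "avoid = (\<lambda>(v, A', S). \<lambda>E. E \<inter> cross_edges (insert v A') (V - insert v A' - S) = {})"
  have fin: "finite V" "finite SS" "finite J"
    unfolding J_def SS_def V_def by (auto intro: finite_subset[of _ "Pow {0..<n}"])
  have bound_nonneg: "0 \<le> bound j" for j
    using p unfolding bound_def x_def by (auto split: prod.split)
  have "gnp_prob n p (\<lambda>E. \<exists>S A. card S < k \<and> separates n E S A)
        \<le> (\<Sum>j\<in>{j\<in>J. ok j}. gnp_prob n p (avoid j))"
  proof (rule gnp_prob_union_bound[OF p])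
    show "finite {j\<in>J. ok j}" using fin by simp
    fix E assume "\<exists>S A. card S < k \<and> separates n E S A"
    then obtain S A0 where S: "card S < k" and "separates n E S A0" by blast
    then obtain A where sep: "separates n E S A" and smaller: "card A \<le> card (V - A - S)"
      unfolding V_def by (metis separates_smaller_side)
    then obtain v where v: "v \<in> A" unfolding separates_def by blast
    have A: "insert v (A - {v}) = A" using v by auto
    then have "(v, A - {v}, S) \<in> {j\<in>J. ok j}"
      using sep smaller S v unfolding J_def SS_def ok_def V_def separates_def by auto
    moreover have "avoid (v, A - {v}, S) E"
      using sep A unfolding avoid_def cross_edges_def separates_def V_def by auto
    ultimately show "\<exists>j\<in>{j\<in>J. ok j}. avoid j E" by blast
  qed
  also have "\<dots> \<le> (\<Sum>j\<in>{j\<in>J. ok j}. bound j)"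
  proof (rule sum_mono)
    fix j assume "j \<in> {j\<in>J. ok j}"
    then obtain v A' S where j: "j = (v, A', S)" "v \<in> V" "A' \<subseteq> V" "S \<in> SS" "ok (v, A', S)"
      unfolding J_def by auto
    then have "card (insert v A') - 1 = card A'"
      using fin(1) finite_subset unfolding ok_def by fastforce
    then show "gnp_prob n p (avoid j) \<le> bound j"
      using gnp_prob_no_cross_edges_le[OF p, of "insert v A'" n S k] j
      unfolding avoid_def bound_def ok_def SS_def V_def x_def by auto
  qed
  also have "\<dots> \<le> (\<Sum>j\<in>J. bound j)"
    using fin bound_nonneg by (intro sum_mono2) auto
  also have "\<dots> = real n * real (card SS) * (1 - p) ^ (n - k) * (1 + x) ^ n"
    using sum_power_card_triples[OF fin(1,2)] unfolding J_def bound_def V_def by simp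
  finally show ?thesis unfolding SS_def V_def x_def by (simp add: mult_ac)
qed

lemma card_small_subsets_le:
  assumes "0 < n"
  shows "card {S. S \<subseteq> {0..<n} \<and> card S < k} \<le> k * n ^ k"
proof -
  have "{S. S \<subseteq> {0..<n} \<and> card S < k} = (\<Union>s<k. {S. S \<subseteq> {0..<n} \<and> card S = s})" by auto
  then have "card {S. S \<subseteq> {0..<n} \<and> card S < k} \<le> (\<Sum>s<k. card {S. S \<subseteq> {0..<n} \<and> card S = s})"
    by (simp add: card_UN_le)
  also have "\<dots> = (\<Sum>s<k. n choose s)" by (simp add: n_subsets)
  also have "\<dots> \<le> (\<Sum>s<k. n ^ k)"
  proof (rule sum_mono)
    fix s assume "s \<in> {..<k}"
    then have "n ^ s \<le> n ^ k" using assms by (intro power_increasing) auto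
    then show "n choose s \<le> n ^ k" using choose_le_power order_trans by blast
  qed
  finally show ?thesis by simp
qed

lemma gnp_prob_nonhamiltonian_le:
  assumes p: "0 \<le> p" "p \<le> 1" and n: "3 \<le> n" and k: "2 \<le> k"
  shows "gnp_prob n p (\<lambda>E. \<not> hamiltonian n E)
    \<le> real n ^ k * (1 - p) ^ (k choose 2)
      + real n * (1 + (1 - p) ^ ((n - k) div 2 - 1)) ^ n * (real k * real n ^ k) * (1 - p) ^ (n - k)"
proof -
  define indep where "indep E \<longleftrightarrow> (\<exists>K. K \<subseteq> {0..<n} \<and> k \<le> card K \<and> independent_set E K)" for E
  define sep where "sep E \<longleftrightarrow> (\<exists>S A. card S < k \<and> separates n E S A)" for E
  have "gnp_prob n p (\<lambda>E. \<not> hamiltonian n E) \<le> gnp_prob n p (\<lambda>E. indep E \<or> sep E)"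
  proof (rule gnp_prob_mono[OF p])
    fix E assume E: "E \<subseteq> all_edges n" and "\<not> hamiltonian n E"
    moreover have "hamiltonian n E" if "\<not> indep E" "\<not> sep E"
      using that by (intro chvatal_erdos[OF E n k]) (auto simp: indep_def sep_def)
    ultimately show "indep E \<or> sep E" by blast
  qed
  also have "\<dots> \<le> gnp_prob n p indep + gnp_prob n p sep" by (rule gnp_prob_disj_le[OF p])
  also have "gnp_prob n p indep \<le> real (n choose k) * (1 - p) ^ (k choose 2)"
    unfolding indep_def by (rule gnp_prob_independent_set_le[OF p])
  also have "\<dots> \<le> real n ^ k * (1 - p) ^ (k choose 2)"
    using choose_le_power[of n k] p by (intro mult_right_mono) (simp_all flip: of_nat_power)
  also have "gnp_prob n p sep \<le> real n * (1 + (1 - p) ^ ((n - k) div 2 - 1)) ^ n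
         * real (card {S. S \<subseteq> {0..<n} \<and> card S < k}) * (1 - p) ^ (n - k)"
    unfolding sep_def by (rule gnp_prob_separator_le[OF p])
  also have "\<dots> \<le> real n * (1 + (1 - p) ^ ((n - k) div 2 - 1)) ^ n
      * (real k * real n ^ k) * (1 - p) ^ (n - k)"
    using card_small_subsets_le[of n k] n p
    by (intro mult_right_mono mult_left_mono) (simp_all flip: of_nat_power of_nat_mult)
  finally show ?thesis by simp
qed

lemma gnp_prob_nonhamiltonian_ge:
  assumes p: "0 \<le> p" "p \<le> 1"
  shows "(1 - p) ^ (n - 1) \<le> gnp_prob n p (\<lambda>E. \<not> hamiltonian n E)"
proof -
  define star where "star = (\<lambda>j. {0, j}) ` {1..<n}"
  have "star \<subseteq> all_edges n"
  proof
    fix e assume "e \<in> star"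
    then obtain j where "1 \<le> j" "j < n" "e = {0, j}" unfolding star_def by auto
    then show "e \<in> all_edges n" unfolding all_edges_def
      by (intro CollectI exI[of _ 0] exI[of _ j]) auto
  qed
  moreover have "card star = n - 1"
    unfolding star_def by (subst card_image) (auto simp: inj_on_def doubleton_eq_iff)
  ultimately have "(1 - p) ^ (n - 1) = gnp_prob n p (\<lambda>E. E \<inter> star = {})"
    by (simp add: gnp_prob_avoid)
  also have "\<dots> \<le> gnp_prob n p (\<lambda>E. \<not> hamiltonian n E)"
  proof (rule gnp_prob_mono[OF p])
    fix E assume E: "E \<subseteq> all_edges n" and isolated: "E \<inter> star = {}"
    show "\<not> hamiltonian n E"
    proof
      assume "hamiltonian n E"
      then obtain f where f: "bij_betw f {0..<n} {0..<n}" "\<forall>i<n. {f i, f ((i + 1) mod n)} \<in> E"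
        and "3 \<le> n" unfolding hamiltonian_def by blast
      then obtain i where "i < n" "f i = 0" unfolding bij_betw_def by (metis atLeast0LessThan
            imageE lessThan_iff zero_less_numeral less_le_trans)
      then have e: "{0, f ((i + 1) mod n)} \<in> E" using f(2) by metis
      then have "{0, f ((i + 1) mod n)} \<in> star"
        using all_edges_memD[OF E e] unfolding star_def by auto
      then show False using e isolated by blast
    qed
  qed
  finally show ?thesis .
qed

section \<open>Asymptotics\<close>

text \<open>Any k with 2n \<le> k choose 2 and k = O(\<surd>n) would do.\<close>
definition sqrt_threshold :: "nat \<Rightarrow> nat" where
  "sqrt_threshold n = 3 * (nat \<lfloor>sqrt (real n)\<rfloor> + 1)"

lemma sqrt_threshold_bounds:
  assumes n: "64 \<le> n"
  shows "real (sqrt_threshold n) \<le> 3 * sqrt n + 3" "2 * n \<le> sqrt_threshold n choose 2"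
    "2 * sqrt_threshold n \<le> n" "2 \<le> sqrt_threshold n"
proof -
  define s where "s = nat \<lfloor>sqrt (real n)\<rfloor>"
  define k where "k = sqrt_threshold n"
  have s: "real s \<le> sqrt n" "sqrt n < real s + 1" unfolding s_def by simp linarith
  have k: "real k = 3 * (real s + 1)" unfolding k_def sqrt_threshold_def s_def by simp
  show "real (sqrt_threshold n) \<le> 3 * sqrt n + 3" using k s unfolding k_def by simp
  show "2 \<le> sqrt_threshold n" unfolding sqrt_threshold_def by simp
  have "8 \<le> sqrt n" by (rule real_le_rsqrt) (use n in simp)
  then have "8 * sqrt n \<le> sqrt n * sqrt n" by (intro mult_right_mono) auto
  then have "8 * sqrt n \<le> real n" by simp
  then have "2 * real k \<le> real n"
    using k s \<open>8 \<le> sqrt n\<close> by (smt (verit))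
  then show "2 * sqrt_threshold n \<le> n" unfolding k_def by linarith
  have "sqrt n * sqrt n < (real s + 1) * (real s + 1)" using s by (intro mult_strict_mono) auto
  then have "real n < (real s + 1) * (real s + 1)" by simp
  moreover have "real k * (real k - 1) = 6 + 15 * real s + 9 * (real s * real s)"
    using k by (simp add: algebra_simps)
  moreover have "(real s + 1) * (real s + 1) = real s * real s + 2 * real s + 1"
    by (simp add: algebra_simps)
  moreover have "0 \<le> real s * real s" by simp
  ultimately have "6 * real n < real k * (real k - 1)" by linarith
  moreover have "real k * (real k - 1) = real (k * (k - 1))"
    using \<open>2 \<le> sqrt_threshold n\<close> unfolding k_def by (simp add: of_nat_diff)
  ultimately have "6 * n < k * (k - 1)" by linarith
  then show "2 * n \<le> sqrt_threshold n choose 2" unfolding k_def by (simp add: choose_two)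
qed

lemma power_eq_exp_ln: "0 < x \<Longrightarrow> x ^ m = exp (real m * ln x)"
  by (simp add: exp_of_nat_mult)

lemma independent_term_le:
  fixes q L \<delta> :: real and n k :: nat
  assumes q: "0 < q" "q \<le> 1" and L: "L = - ln q" and n: "0 < n"
    and k: "2 * n \<le> k choose 2" and slack: "2 + (real k + 2) * ln n + L * real k \<le> \<delta> * L * n"
  shows "real n ^ k * q ^ (k choose 2) \<le> exp (-(1 - \<delta>) * L * n - 2)"
proof -
  have "0 \<le> L" using L q by simp
  then have "0 \<le> ln (real n)" "0 \<le> L * real k" "(real k + 2) * ln n = real k * ln n + 2 * ln n"
    using n by (simp_all add: algebra_simps)
  then have slack': "2 + k * ln n \<le> \<delta> * L * n" using slack by linarith
  have "q ^ (k choose 2) \<le> q ^ (2 * n)" using q k by (intro power_decreasing) auto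
  then have "real n ^ k * q ^ (k choose 2) \<le> real n ^ k * q ^ (2 * n)"
    by (intro mult_left_mono) auto
  also have "\<dots> = exp (k * ln n - 2 * L * n)"
    using q n L by (simp add: power_eq_exp_ln mult_exp_exp algebra_simps)
  also have "\<dots> \<le> exp (-(1 - \<delta>) * L * n - 2)"
    using slack' L q mult_nonneg_nonneg[of L "real n"] by (simp add: algebra_simps)
  finally show ?thesis .
qed

lemma real_times_power_le_one:
  fixes q L :: real and n h :: nat
  assumes q: "0 < q" "q \<le> 1" and L: "L = - ln q" and n: "0 < n" "n \<le> 8 * h"
    and decay: "8 * ln n \<le> L * n"
  shows "real n * q ^ h \<le> 1"
proof -
  have "0 \<le> L" using L q by simp
  moreover have "real n \<le> 8 * real h" using n by simp
  ultimately have "L * n \<le> 8 * (L * h)" by (metis mult.left_commute mult_left_mono)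
  then have "ln n \<le> L * h" using decay by linarith
  have "real n * q ^ h = exp (ln n) * exp (h * ln q)" using q n by (simp add: power_eq_exp_ln)
  also have "\<dots> = exp (ln n - L * h)" by (simp only: mult_exp_exp) (simp add: L algebra_simps)
  also have "\<dots> \<le> 1" using \<open>ln n \<le> L * h\<close> by simp
  finally show ?thesis .
qed

lemma separator_term_le:
  fixes q L \<delta> :: real and n k h :: nat
  assumes q: "0 < q" "q \<le> 1" and L: "L = - ln q" and n: "0 < n" and k: "k \<le> n"
    and small: "real n * q ^ h \<le> 1" and slack: "2 + (real k + 2) * ln n + L * real k \<le> \<delta> * L * n"
  shows "real n * (1 + q ^ h) ^ n * (real k * real n ^ k) * q ^ (n - k)
         \<le> exp (-(1 - \<delta>) * L * n - 1)"
proof -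
  have "(1 + q ^ h) ^ n \<le> exp (q ^ h) ^ n" using q by (intro power_mono) auto
  also have "\<dots> = exp (real n * q ^ h)" by (simp add: exp_of_nat_mult)
  also have "\<dots> \<le> exp 1" using small by simp
  finally have "(1 + q ^ h) ^ n \<le> exp 1" .
  then have "real n * (1 + q ^ h) ^ n * (real k * real n ^ k) * q ^ (n - k)
      \<le> real n * exp 1 * (real n * real n ^ k) * q ^ (n - k)"
    using q k by (intro mult_mono mult_right_mono mult_left_mono) auto
  also have "\<dots> = exp (ln n) * exp 1 * (exp (ln n) * exp (k * ln n)) * exp ((n - k) * ln q)"
    using q n by (simp add: power_eq_exp_ln)
  also have "\<dots> = exp (ln n + 1 + ln n + k * ln n - L * (real n - k))"
    by (simp only: mult_exp_exp) (simp add: L k of_nat_diff algebra_simps)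
  also have "\<dots> \<le> exp (-(1 - \<delta>) * L * n - 1)"
    using slack by (simp add: algebra_simps)
  finally show ?thesis .
qed

lemma sqrt_threshold_slack:
  fixes L Lmax \<delta> :: real and n :: nat
  assumes n: "64 \<le> n" and L: "0 \<le> L" "L \<le> Lmax"
    and growth: "(10 + 6 * Lmax) * sqrt n * ln n \<le> \<delta> * L * n"
  shows "2 + (real (sqrt_threshold n) + 2) * ln n + L * real (sqrt_threshold n) \<le> \<delta> * L * n"
proof -
  define k where "k = sqrt_threshold n"
  have k: "real k \<le> 3 * sqrt n + 3" using sqrt_threshold_bounds(1)[OF n] unfolding k_def .
  have "exp 1 \<le> real n" using exp_le n by linarith
  then have ln: "1 \<le> ln (real n)" using n by (simp add: ln_ge_iff)
  have sq: "1 \<le> sqrt (real n)" using n by simp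
  have "real k + 2 \<le> 8 * sqrt n" using k sq by (smt (verit))
  then have "(real k + 2) * ln n \<le> 8 * sqrt n * ln n" using ln by (intro mult_right_mono) auto
  moreover have "L * real k \<le> 6 * Lmax * sqrt n * ln n"
  proof -
    have "real k \<le> 6 * sqrt n" using k sq by (smt (verit))
    then have "L * real k \<le> Lmax * (6 * sqrt n)" using L by (intro mult_mono) auto
    also have "\<dots> \<le> Lmax * (6 * sqrt n) * ln n"
      using mult_left_mono[OF ln, of "Lmax * (6 * sqrt n)"] L by simp
    finally show ?thesis by (simp add: algebra_simps)
  qed
  moreover have "1 \<le> sqrt n * ln n" using mult_mono[OF sq ln] by simp
  ultimately show ?thesis using growth unfolding k_def[symmetric] by (simp add: algebra_simps)
qed

lemma gnp_prob_nonhamiltonian_le_exp: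
  fixes q L Lmax \<delta> :: real and n :: nat
  assumes n: "64 \<le> n" and \<delta>: "0 < \<delta>" "\<delta> < 1" and q: "0 < q" "q \<le> 1"
    and L: "L = - ln q" "L \<le> Lmax"
    and growth: "(10 + 6 * Lmax) * sqrt n * ln n \<le> \<delta> * L * n" "8 * ln n \<le> L * n"
  shows "gnp_prob n (1 - q) (\<lambda>E. \<not> hamiltonian n E) \<le> exp (-(1 - \<delta>) * L * n)"
proof -
  define k where "k = sqrt_threshold n"
  define h where "h = (n - k) div 2 - 1"
  note k = sqrt_threshold_bounds[OF n, folded k_def]
  have slack: "2 + (real k + 2) * ln n + L * real k \<le> \<delta> * L * n"
    using L q growth(1) unfolding k_def by (intro sqrt_threshold_slack[OF n]) auto
  have "real n \<le> 8 * real h" unfolding h_def using k(3) n by linarith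
  then have small: "real n * q ^ h \<le> 1"
    using n q L growth(2) by (intro real_times_power_le_one) auto
  have "gnp_prob n (1 - q) (\<lambda>E. \<not> hamiltonian n E)
      \<le> real n ^ k * q ^ (k choose 2)
        + real n * (1 + q ^ h) ^ n * (real k * real n ^ k) * q ^ (n - k)"
    using gnp_prob_nonhamiltonian_le[of "1 - q" n k] q n k(4) unfolding h_def by simp
  also have "\<dots> \<le> exp (-(1 - \<delta>) * L * n - 2) + exp (-(1 - \<delta>) * L * n - 1)"
  proof (rule add_mono)
    show "real n ^ k * q ^ (k choose 2) \<le> exp (-(1 - \<delta>) * L * n - 2)"
      using n k(2) by (intro independent_term_le[OF q L(1) _ _ slack]) auto
    show "real n * (1 + q ^ h) ^ n * (real k * real n ^ k) * q ^ (n - k)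
        \<le> exp (-(1 - \<delta>) * L * n - 1)"
      using n k(3) by (intro separator_term_le[OF q L(1) _ _ small slack]) auto
  qed
  also have "\<dots> = exp (-(1 - \<delta>) * L * n) * (exp (-2) + exp (-1))"
    by (simp add: distrib_left flip: exp_add)
  also have "\<dots> \<le> exp (-(1 - \<delta>) * L * n)"
  proof -
    have "2 \<le> exp (1::real)" using exp_ge_add_one_self[of 1] by simp
    then have "exp (-1::real) \<le> 1 / 2" by (simp add: exp_minus field_simps)
    moreover have "exp (-2) \<le> exp (-1::real)" by simp
    ultimately have "exp (-2) + exp (-1) \<le> (1::real)" by linarith
    then show ?thesis by (intro mult_right_le_one_le) auto
  qed
  finally show ?thesis .
qed

lemma exists_exponent_tendsto_zero:
  fixes P q :: "nat \<Rightarrow> real"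
  assumes q: "\<forall>\<^sub>F n in sequentially. 0 < q n \<and> q n < 1"
    and lower: "\<forall>\<^sub>F n in sequentially. q n ^ n \<le> P n"
    and upper: "\<And>\<delta>. 0 < \<delta> \<Longrightarrow> \<delta> < 1 \<Longrightarrow> \<forall>\<^sub>F n in sequentially. P n \<le> q n powr ((1 - \<delta>) * real n)"
  shows "\<exists>g. g \<longlonglongrightarrow> 0 \<and> (\<forall>\<^sub>F n in sequentially. P n = q n powr ((1 + g n) * real n))"
proof -
  define g where "g n = ln (P n) / (n * ln (q n)) - 1" for n
  have good: "\<forall>\<^sub>F n in sequentially.
      0 < n \<and> 0 < q n \<and> q n < 1 \<and> 0 < P n \<and> n * ln (q n) \<le> ln (P n)"
    using q lower eventually_gt_at_top[of 0]
  proof eventually_elim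
    case (elim n)
    then have "0 < P n" by (meson less_le_trans zero_less_power)
    then show ?case using elim by (simp add: ln_realpow[symmetric])
  qed
  have "\<forall>\<^sub>F n in sequentially. P n = q n powr ((1 + g n) * real n)"
    using good
  proof eventually_elim
    case (elim n)
    then have "ln (q n) < 0" by (simp add: ln_less_zero)
    then show ?case using elim unfolding g_def by (simp add: powr_def)
  qed
  moreover have "g \<longlonglongrightarrow> 0"
  proof (rule tendstoI)
    fix e :: real assume "0 < e"
    define \<delta> where "\<delta> = min (e / 2) (1 / 2)"
    have \<delta>: "0 < \<delta>" "\<delta> < 1" "\<delta> < e" unfolding \<delta>_def using \<open>0 < e\<close> by auto
    show "\<forall>\<^sub>F n in sequentially. dist (g n) 0 < e"
      using good upper[OF \<delta>(1,2)]
    proof eventually_elim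
      case (elim n)
      define c where "c = n * ln (q n)"
      have c: "c < 0" using elim unfolding c_def by (simp add: mult_pos_neg)
      have "ln (P n) \<le> (1 - \<delta>) * c"
        using elim ln_le_cancel_iff[of "P n" "q n powr ((1 - \<delta>) * real n)"]
        unfolding c_def by (simp add: ln_powr)
      then have "1 - \<delta> \<le> ln (P n) / c" using c by (simp add: le_divide_eq_1 field_simps)
      moreover have "ln (P n) / c \<le> 1" using elim c unfolding c_def by (simp add: divide_le_eq_1)
      ultimately show ?case using \<delta> unfolding g_def c_def[symmetric] by (simp add: dist_real_def)
    qed
  qed
  ultimately show ?thesis by blast
qed

lemma sqrt_ln_le_of_ratio_ge:
  fixes M p L :: real and n :: nat
  assumes "M \<le> p * sqrt n / ln n" "1 < n" "p \<le> L"
  shows "M * (sqrt n * ln n) \<le> L * n"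
proof -
  have ln: "0 < ln (real n)" using assms(2) by simp
  have "M * (sqrt n * ln n) \<le> p * sqrt n / ln n * (sqrt n * ln n)"
    using assms(1) ln by (intro mult_right_mono) auto
  also have "\<dots> = p * n" using ln by (simp add: field_simps)
  also have "\<dots> \<le> L * n" using assms(3) by (simp add: mult_right_mono)
  finally show ?thesis .
qed

lemma eventually_gnp_prob_nonhamiltonian_le:
  fixes p :: "nat \<Rightarrow> real" and \<epsilon> \<delta> :: real
  assumes \<epsilon>: "0 < \<epsilon>" and p: "\<And>n. 0 \<le> p n \<and> p n \<le> 1 - \<epsilon>" and \<delta>: "0 < \<delta>" "\<delta> < 1"
    and lim: "filterlim (\<lambda>n. p n * sqrt (real n) / ln (real n)) at_top sequentially"
  shows "\<forall>\<^sub>F n in sequentially.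
           gnp_prob n (p n) (\<lambda>E. \<not> hamiltonian n E) \<le> (1 - p n) powr ((1 - \<delta>) * real n)"
proof -
  define Lmax where "Lmax = - ln \<epsilon>"
  define M where "M = max 8 ((10 + 6 * Lmax) / \<delta>)"
  have "\<forall>\<^sub>F n in sequentially. 64 \<le> n \<and> M \<le> p n * sqrt (real n) / ln (real n)"
    using eventually_ge_at_top[of 64] lim[unfolded filterlim_at_top, rule_format, of M]
    by eventually_elim simp
  then show ?thesis
  proof eventually_elim
    case (elim n)
    define q where "q = 1 - p n"
    define L where "L = - ln q"
    have q: "0 < q" "q \<le> 1" "\<epsilon> \<le> q" using p[of n] \<epsilon> unfolding q_def by auto
    have "L \<le> Lmax" unfolding L_def Lmax_def using q \<epsilon> by simp
    have "p n \<le> L" using ln_le_minus_one[of q] q unfolding L_def q_def by simp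
    have ln: "0 < ln (real n)" and sq: "1 \<le> sqrt (real n)" using elim by auto
    have growth: "M * (sqrt n * ln n) \<le> L * n"
      using elim \<open>p n \<le> L\<close> by (intro sqrt_ln_le_of_ratio_ge) auto
    have "8 * ln n \<le> M * (sqrt n * ln n)"
      using sq ln unfolding M_def by (intro mult_mono) (auto simp: mult_le_cancel_right1)
    then have H2: "8 * ln n \<le> L * n" using growth by linarith
    have "(10 + 6 * Lmax) / \<delta> \<le> M" unfolding M_def by simp
    then have "10 + 6 * Lmax \<le> \<delta> * M" using \<delta> by (simp add: pos_divide_le_eq mult.commute)
    then have "(10 + 6 * Lmax) * (sqrt n * ln n) \<le> \<delta> * (M * (sqrt n * ln n))"
      using ln by (simp add: mult.assoc[symmetric] mult_right_mono)
    also have "\<dots> \<le> \<delta> * (L * n)" using growth \<delta> by (intro mult_left_mono) auto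
    finally have H1: "(10 + 6 * Lmax) * sqrt n * ln n \<le> \<delta> * L * n" by (simp add: mult.assoc)
    have "gnp_prob n (1 - q) (\<lambda>E. \<not> hamiltonian n E) \<le> exp (-(1 - \<delta>) * L * n)"
      using elim
        by (intro gnp_prob_nonhamiltonian_le_exp[OF _ \<delta> q(1,2) L_def \<open>L \<le> Lmax\<close> H1 H2]) simp
    also have "\<dots> = q powr ((1 - \<delta>) * real n)"
      using q unfolding L_def by (simp add: powr_def algebra_simps)
    finally show ?case unfolding q_def by simp
  qed
qed

theorem corollary7:
  fixes p :: "nat \<Rightarrow> real" and \<epsilon> :: real
  assumes "0 < \<epsilon>" and "\<epsilon> < 1"
    and "\<And>n. 0 \<le> p n \<and> p n \<le> 1 - \<epsilon>"
    and "filterlim (\<lambda>n. p n * sqrt (real n) / ln (real n)) at_top sequentially"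
  shows "\<exists>g :: nat \<Rightarrow> real. g \<longlonglongrightarrow> 0 \<and>
           (\<forall>\<^sub>F n in sequentially.
              gnp_prob n (p n) (\<lambda>E. \<not> hamiltonian n E) = (1 - p n) powr ((1 + g n) * real n))"
proof (rule exists_exponent_tendsto_zero)
  note p = assms(3)
  have "\<forall>\<^sub>F n in sequentially. 3 \<le> n \<and> 1 \<le> p n * sqrt (real n) / ln (real n)"
    using eventually_ge_at_top[of 3] assms(4)[unfolded filterlim_at_top, rule_format, of 1]
    by eventually_elim simp
  then show "\<forall>\<^sub>F n in sequentially. 0 < 1 - p n \<and> 1 - p n < 1"
  proof eventually_elim
    case (elim n)
    then have "p n \<noteq> 0" by auto
    then show ?case using p[of n] assms(1) by auto
  qed
  show "\<forall>\<^sub>F n in sequentially. (1 - p n) ^ n \<le> gnp_prob n (p n) (\<lambda>E. \<not> hamiltonian n E)"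
  proof (intro always_eventually allI order_trans[OF power_decreasing gnp_prob_nonhamiltonian_ge])
    show "0 \<le> p n" "p n \<le> 1" "0 \<le> 1 - p n" "1 - p n \<le> 1" "n - 1 \<le> n" for n
      using p[of n] assms(1) by auto
  qed
  show "\<forall>\<^sub>F n in sequentially. gnp_prob n (p n) (\<lambda>E. \<not> hamiltonian n E)
          \<le> (1 - p n) powr ((1 - \<delta>) * real n)" if "0 < \<delta>" "\<delta> < 1" for \<delta>
    using eventually_gnp_prob_nonhamiltonian_le[OF assms(1) p that assms(4)] .
qed

end
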